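(* Consider a finite reward-free MDP with occupancy polytope $\Phi$. Let $\mathcal D=\{(d_e^k,\epsilon^k)\}_{k=1}^K$ with $K\ge1$, $d_e^k\in\Phi$, $\epsilon^k\ge0$, and let $d_e'\in\Phi$. Let $\mathcal Z_{\mathcal D}:=\bigcup_{k=1}^K\mathrm{supp}(d_e^k)$ and $\alpha(d_e',\mathcal D):=\sum_{(s,a)\notin\mathcal Z_{\mathcal D}}d_e'(s,a)$. Then there exists a reward $r_{\mathcal Z}\in\mathcal R(\mathcal D)$ such that \[\mathrm{subopt}(r_{\mathcal Z},d_e')=\frac{\alpha(d_e',\mathcal D)}{|\mathcal Z_{\mathcal D}|}.\]
   Context: The MDP has finite $S$, $A$, transitions $P$, initial distribution $\mu_0$, discount $\gamma\in(0,1)$; $(Md)(s)=\sum_a d(s,a)-\gamma\sum_{s',a'}P(s\mid s',a')d(s',a')$ and $\Phi=\{d\ge0:Md=(1-\gamma)\mu_0\}$. Rewards are $r\in\Delta(S\times A)$ (probability simplex). $\mathrm{subopt}(r,d):=\max_{\tilde d\in\Phi}r^\top\tilde d-r^\top d$. $\mathcal R(\mathcal D):=\{r\in\Delta(S\times A):\mathrm{subopt}(r,d_e^k)\le\epsilon^k\ \forall k\}$. $\mathrm{supp}(d)=\{(s,a):d(s,a)\ne0\}$. *)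

theory Defs
  imports "HOL-Analysis.Analysis"
begin

text \<open>Finite MDP: states 's, actions 'a (finite types).
  P s' a' s is the transition probability P(s | s', a').
  Occupancy measures and rewards are functions on S x A.\<close>

definition valid_mdp :: "('s::finite \<Rightarrow> 'a::finite \<Rightarrow> 's \<Rightarrow> real) \<Rightarrow> ('s \<Rightarrow> real) \<Rightarrow> real \<Rightarrow> bool" where
  "valid_mdp P mu0 gamma \<longleftrightarrow>
     (\<forall>s a s'. 0 \<le> P s a s') \<and> (\<forall>s a. (\<Sum>s'\<in>UNIV. P s a s') = 1) \<and>
     (\<forall>s. 0 \<le> mu0 s) \<and> (\<Sum>s\<in>UNIV. mu0 s) = 1 \<and> 0 < gamma \<and> gamma < 1"

definition Mop :: "('s::finite \<Rightarrow> 'a::finite \<Rightarrow> 's \<Rightarrow> real) \<Rightarrow> real \<Rightarrow> ('s \<times> 'a \<Rightarrow> real) \<Rightarrow> 's \<Rightarrow> real" where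
  "Mop P gamma d s = (\<Sum>a\<in>UNIV. d (s, a)) - gamma * (\<Sum>x\<in>UNIV. P (fst x) (snd x) s * d x)"

definition occ :: "('s::finite \<Rightarrow> 'a::finite \<Rightarrow> 's \<Rightarrow> real) \<Rightarrow> ('s \<Rightarrow> real) \<Rightarrow> real \<Rightarrow> ('s \<times> 'a \<Rightarrow> real) set" where
  "occ P mu0 gamma = {d. (\<forall>x. 0 \<le> d x) \<and> (\<forall>s. Mop P gamma d s = (1 - gamma) * mu0 s)}"

definition reward_simplex :: "('x::finite \<Rightarrow> real) set" where
  "reward_simplex = {r. (\<forall>x. 0 \<le> r x) \<and> (\<Sum>x\<in>UNIV. r x) = 1}"

definition ip :: "('x::finite \<Rightarrow> real) \<Rightarrow> ('x \<Rightarrow> real) \<Rightarrow> real" where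
  "ip r d = (\<Sum>x\<in>UNIV. r x * d x)"

text \<open>subopt(r,d) = max over Phi of r^T d~ minus r^T d (max = Sup, attained as Phi is a polytope).\<close>
definition subopt :: "('s::finite \<Rightarrow> 'a::finite \<Rightarrow> 's \<Rightarrow> real) \<Rightarrow> ('s \<Rightarrow> real) \<Rightarrow> real \<Rightarrow> ('s \<times> 'a \<Rightarrow> real) \<Rightarrow> ('s \<times> 'a \<Rightarrow> real) \<Rightarrow> real" where
  "subopt P mu0 gamma r d = (SUP d'\<in>occ P mu0 gamma. ip r d') - ip r d"

definition feasR :: "('s::finite \<Rightarrow> 'a::finite \<Rightarrow> 's \<Rightarrow> real) \<Rightarrow> ('s \<Rightarrow> real) \<Rightarrow> real \<Rightarrow> nat \<Rightarrow> (nat \<Rightarrow> 's \<times> 'a \<Rightarrow> real) \<Rightarrow> (nat \<Rightarrow> real) \<Rightarrow> ('s \<times> 'a \<Rightarrow> real) set" where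
  "feasR P mu0 gamma K de eps = {r \<in> reward_simplex. \<forall>k\<in>{1..K}. subopt P mu0 gamma r (de k) \<le> eps k}"

definition supp :: "('x \<Rightarrow> real) \<Rightarrow> 'x set" where
  "supp d = {x. d x \<noteq> 0}"

definition ZD :: "nat \<Rightarrow> (nat \<Rightarrow> 'x \<Rightarrow> real) \<Rightarrow> 'x set" where
  "ZD K de = (\<Union>k\<in>{1..K}. supp (de k))"

definition alphaD :: "('x::finite \<Rightarrow> real) \<Rightarrow> nat \<Rightarrow> (nat \<Rightarrow> 'x \<Rightarrow> real) \<Rightarrow> real" where
  "alphaD d' K de = (\<Sum>x\<in>- ZD K de. d' x)"

end

theory Submission
  imports Defs
begin

text \<open>Summing the flow constraint over all states shows that every occupancy measure is a
  probability distribution on \<open>S \<times> A\<close>. Hence the uniform reward on a nonempty set \<open>Z\<close> has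
  value at most \<open>1 / |Z|\<close> on \<open>\<Phi>\<close>, with equality exactly for the occupancy measures supported
  in \<open>Z\<close>, and the suboptimality of \<open>d\<close> is its mass outside \<open>Z\<close> divided by \<open>|Z|\<close>. For
  \<open>Z = Z\<^sub>D\<close> every expert occupancy measure is supported in \<open>Z\<close>, hence optimal, so this reward
  is feasible whatever the tolerances \<open>\<epsilon>\<^sup>k \<ge> 0\<close>.\<close>

lemma occ_sum_eq_1:
  fixes P :: "'s::finite \<Rightarrow> 'a::finite \<Rightarrow> 's \<Rightarrow> real"
  assumes P_stochastic: "\<And>s a. (\<Sum>s'\<in>UNIV. P s a s') = 1"
    and mu0_sum: "(\<Sum>s\<in>UNIV. mu0 s) = 1" and gamma: "gamma \<noteq> 1"
    and d: "d \<in> occ P mu0 gamma"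
  shows "(\<Sum>x\<in>UNIV. d x) = 1"
proof -
  have "(\<Sum>s\<in>UNIV. Mop P gamma d s) = (1 - gamma) * (\<Sum>s\<in>UNIV. mu0 s)"
    using d by (simp add: occ_def sum_distrib_left)
  also have "\<dots> = 1 - gamma" using mu0_sum by simp
  finally have total_flow: "(\<Sum>s\<in>UNIV. Mop P gamma d s) = 1 - gamma" .
  have outflow: "(\<Sum>s\<in>UNIV. \<Sum>a\<in>UNIV. d (s, a)) = (\<Sum>x\<in>UNIV. d x)"
    by (simp add: sum.cartesian_product UNIV_Times_UNIV[symmetric] del: UNIV_Times_UNIV)
  have "(\<Sum>s\<in>UNIV. \<Sum>x\<in>UNIV. P (fst x) (snd x) s * d x)
      = (\<Sum>x\<in>UNIV. (\<Sum>s\<in>UNIV. P (fst x) (snd x) s) * d x)"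
    by (subst sum.swap) (simp add: sum_distrib_right)
  also have "\<dots> = (\<Sum>x\<in>UNIV. d x)" using P_stochastic by simp
  finally have inflow: "(\<Sum>s\<in>UNIV. \<Sum>x\<in>UNIV. P (fst x) (snd x) s * d x) = (\<Sum>x\<in>UNIV. d x)" .
  have "(\<Sum>s\<in>UNIV. Mop P gamma d s) = (1 - gamma) * (\<Sum>x\<in>UNIV. d x)"
    unfolding Mop_def sum_subtractf sum_distrib_left[symmetric] outflow inflow
    by (simp add: algebra_simps)
  with total_flow gamma show ?thesis by simp
qed

lemma valid_mdp_occ_sum_eq_1:
  fixes P :: "'s::finite \<Rightarrow> 'a::finite \<Rightarrow> 's \<Rightarrow> real"
  assumes "valid_mdp P mu0 gamma" and "d \<in> occ P mu0 gamma"
  shows "(\<Sum>x\<in>UNIV. d x) = 1"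
  using assms by (intro occ_sum_eq_1) (auto simp: valid_mdp_def)

lemma supp_nonempty_if_sum_eq_1:
  fixes d :: "'x::finite \<Rightarrow> real"
  assumes "(\<Sum>x\<in>UNIV. d x) = 1"
  shows "supp d \<noteq> {}"
proof
  assume "supp d = {}"
  then have "(\<Sum>x\<in>UNIV. d x) = 0" by (simp add: supp_def)
  with assms show False by simp
qed

lemma sum_eq_1_minus_sum_Compl:
  fixes d :: "'x::finite \<Rightarrow> real"
  assumes "(\<Sum>x\<in>UNIV. d x) = 1"
  shows "(\<Sum>x\<in>Z. d x) = 1 - (\<Sum>x\<in>- Z. d x)"
  using assms sum.subset_diff[of Z UNIV d] by (simp add: Compl_eq_Diff_UNIV)

lemma sum_Compl_eq_0_if_supp_subset:
  assumes "supp d \<subseteq> Z"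
  shows "(\<Sum>x\<in>- Z. d x) = 0"
  using assms by (intro sum.neutral) (auto simp: supp_def)

definition uniform_reward :: "'x set \<Rightarrow> 'x \<Rightarrow> real" where
  "uniform_reward Z x = (if x \<in> Z then 1 / real (card Z) else 0)"

lemma uniform_reward_in_simplex:
  fixes Z :: "'x::finite set"
  assumes "Z \<noteq> {}"
  shows "uniform_reward Z \<in> reward_simplex"
  using assms by (simp add: reward_simplex_def uniform_reward_def sum.If_cases)

lemma ip_uniform_reward:
  fixes Z :: "'x::finite set"
  shows "ip (uniform_reward Z) d = (\<Sum>x\<in>Z. d x) / real (card Z)"
proof -
  have "ip (uniform_reward Z) d = (\<Sum>x\<in>UNIV. if x \<in> Z then d x / real (card Z) else 0)"
    unfolding ip_def uniform_reward_def by (rule sum.cong) auto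
  also have "\<dots> = (\<Sum>x\<in>Z. d x / real (card Z))" by (simp add: sum.If_cases)
  finally show ?thesis by (simp only: sum_divide_distrib)
qed

lemma ip_uniform_reward_prob:
  fixes Z :: "'x::finite set"
  assumes "(\<Sum>x\<in>UNIV. d x) = 1"
  shows "ip (uniform_reward Z) d = (1 - (\<Sum>x\<in>- Z. d x)) / real (card Z)"
  unfolding ip_uniform_reward sum_eq_1_minus_sum_Compl[OF assms, of Z] ..

lemma Sup_ip_uniform_reward:
  fixes P :: "'s::finite \<Rightarrow> 'a::finite \<Rightarrow> 's \<Rightarrow> real"
  assumes mdp: "valid_mdp P mu0 gamma"
    and d0: "d0 \<in> occ P mu0 gamma" and d0_supp: "supp d0 \<subseteq> Z"
  shows "(SUP d\<in>occ P mu0 gamma. ip (uniform_reward Z) d) = 1 / real (card Z)"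
proof (rule cSup_eq_maximum)
  show "1 / real (card Z) \<in> ip (uniform_reward Z) ` occ P mu0 gamma"
    using d0 d0_supp valid_mdp_occ_sum_eq_1[OF mdp d0]
    by (intro image_eqI[of _ _ d0])
      (simp_all add: ip_uniform_reward_prob sum_Compl_eq_0_if_supp_subset)
next
  fix v assume "v \<in> ip (uniform_reward Z) ` occ P mu0 gamma"
  then obtain d where d: "d \<in> occ P mu0 gamma" and v: "v = ip (uniform_reward Z) d" by blast
  have "0 \<le> (\<Sum>x\<in>- Z. d x)" using d by (intro sum_nonneg) (auto simp: occ_def)
  then show "v \<le> 1 / real (card Z)"
    using valid_mdp_occ_sum_eq_1[OF mdp d]
    by (simp add: v ip_uniform_reward_prob divide_right_mono)
qed

lemma subopt_uniform_reward:
  fixes P :: "'s::finite \<Rightarrow> 'a::finite \<Rightarrow> 's \<Rightarrow> real"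
  assumes mdp: "valid_mdp P mu0 gamma"
    and "d0 \<in> occ P mu0 gamma" and "supp d0 \<subseteq> Z"
    and d: "d \<in> occ P mu0 gamma"
  shows "subopt P mu0 gamma (uniform_reward Z) d = (\<Sum>x\<in>- Z. d x) / real (card Z)"
  using assms valid_mdp_occ_sum_eq_1[OF mdp d]
  by (simp add: subopt_def Sup_ip_uniform_reward ip_uniform_reward_prob diff_divide_distrib)

lemma supp_subset_ZD:
  assumes "k \<in> {1..K}"
  shows "supp (de k) \<subseteq> ZD K de"
  using assms by (auto simp: ZD_def)

theorem mainTheorem4:
  fixes P :: "'s::finite \<Rightarrow> 'a::finite \<Rightarrow> 's \<Rightarrow> real"
    and mu0 :: "'s \<Rightarrow> real" and gamma :: real
    and K :: nat and de :: "nat \<Rightarrow> 's \<times> 'a \<Rightarrow> real" and eps :: "nat \<Rightarrow> real"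
    and de' :: "'s \<times> 'a \<Rightarrow> real"
  assumes "valid_mdp P mu0 gamma"
    and "K \<ge> 1"
    and "\<forall>k\<in>{1..K}. de k \<in> occ P mu0 gamma"
    and "\<forall>k\<in>{1..K}. eps k \<ge> 0"
    and "de' \<in> occ P mu0 gamma"
  shows "\<exists>r\<in>feasR P mu0 gamma K de eps.
           subopt P mu0 gamma r de' = alphaD de' K de / real (card (ZD K de))"
proof -
  define Z where "Z = ZD K de"
  have one: "1 \<in> {1..K}" using assms(2) by simp
  have de1: "de 1 \<in> occ P mu0 gamma" using assms(3) one by blast
  have de1_supp: "supp (de 1) \<subseteq> Z" using supp_subset_ZD[OF one] by (simp add: Z_def)
  have subopt_Z: "subopt P mu0 gamma (uniform_reward Z) d = (\<Sum>x\<in>- Z. d x) / real (card Z)"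
    if "d \<in> occ P mu0 gamma" for d
    using subopt_uniform_reward[OF assms(1) de1 de1_supp that] .
  have "Z \<noteq> {}"
    using de1_supp supp_nonempty_if_sum_eq_1[OF valid_mdp_occ_sum_eq_1[OF assms(1) de1]] by blast
  moreover have "subopt P mu0 gamma (uniform_reward Z) (de k) \<le> eps k" if k: "k \<in> {1..K}" for k
  proof -
    have "(\<Sum>x\<in>- Z. de k x) = 0"
      using supp_subset_ZD[OF k] by (intro sum_Compl_eq_0_if_supp_subset) (simp add: Z_def)
    then show ?thesis using subopt_Z[of "de k"] assms(3,4) k by simp
  qed
  ultimately have "uniform_reward Z \<in> feasR P mu0 gamma K de eps"
    by (simp add: feasR_def uniform_reward_in_simplex)
  moreover have "subopt P mu0 gamma (uniform_reward Z) de' = alphaD de' K de / real (card Z)"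
    using subopt_Z[OF assms(5)] by (simp add: alphaD_def Z_def)
  ultimately show ?thesis by (auto simp: Z_def)
qed

end
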